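(* Let $R\ge1$ and let $G$ be an observable of $R$ replicas. For every finite box $\Lambda$ and every $\beta$, $$\Delta_2 G=-\beta R\Big[\sum_{k=1}^{R}\langle G\,q_{k,R+1}\rangle-(R+1)\langle G\,q_{R+1,R+2}\rangle+\langle G\rangle\langle q_{1,2}\rangle\Big],$$ where $\Delta_2 G=\sum_{l=1}^{R}\big(\mathrm{Av}(\Omega_R[h(\sigma^{(l)})]\,\Omega_R[G])-\mathrm{Av}(\Omega_R[h(\sigma^{(l)})])\,\mathrm{Av}(\Omega_R[G])\big)$ and $h(\sigma)=H_\Lambda(\sigma)/|\Lambda|$.
   Context: For each finite $d$-dimensional parallelepiped $\Lambda\subset\mathbb{Z}^d$ let $\Sigma_\Lambda=\{-1,1\}^\Lambda$, and for $X\subset\Lambda$ let $\sigma_X=\prod_{i\in X}\sigma_i$ (with $\sigma_\emptyset=0$). Let $\{J_X\}$ be independent centered Gaussian random variables with variances $\mathrm{Av}(J_X^2)=\Delta_X^2$, translation invariant, where $\mathrm{Av}$ denotes expectation over the $J$'s. The Hamiltonian is $H_\Lambda(\sigma)=-\sum_{X\subset\Lambda}J_X\sigma_X$, with normalized covariance $c_\Lambda(\sigma,\tau)=\frac{1}{|\Lambda|}\sum_{X\subset\Lambda}\Delta_X^2\sigma_X\tau_X$. Let $\mathcal{Z}(\beta)=\sum_{\sigma}e^{-\beta H_\Lambda(\sigma)}$ and for $n\ge1$ the $n$-replica random Gibbs state $\Omega_n(f)=\sum_{\sigma^{(1)},\dots,\sigma^{(n)}}f\,e^{-\beta\sum_{i=1}^n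 H_\Lambda(\sigma^{(i)})}/\mathcal{Z}(\beta)^n$. An observable of $R$ replicas is a smooth function $G$ of an $R\times R$ real matrix with $|G|\le1$, evaluated at $(c_\Lambda(\sigma^{(k)},\sigma^{(l)}))_{k,l\le R}$. Notation: $\langle G\rangle=\mathrm{Av}\,\Omega_R(G)$; $\langle G\,q_{k,l}\rangle=\mathrm{Av}\,\Omega_n\big(G((c_\Lambda(\sigma^{(i)},\sigma^{(j)}))_{i,j\le R})\,c_\Lambda(\sigma^{(k)},\sigma^{(l)})\big)$ with $n=\max(R,k,l)$; $\langle q_{1,2}\rangle=\mathrm{Av}\,\Omega_2(c_\Lambda(\sigma^{(1)},\sigma^{(2)}))$. *)

theory Defs
  imports "HOL-Analysis.Analysis" "HOL-Probability.Probability"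
begin

fun Ck :: "nat \<Rightarrow> ('a::real_normed_vector \<Rightarrow> real) \<Rightarrow> bool" where
  "Ck 0 f = continuous_on UNIV f"
| "Ck (Suc n) f = (\<exists>f'. (\<forall>x. (f has_derivative f' x) (at x)) \<and> (\<forall>v. Ck n (\<lambda>x. f' x v)))"

definition smooth_fun :: "('a::real_normed_vector \<Rightarrow> real) \<Rightarrow> bool" where
  "smooth_fun f \<longleftrightarrow> (\<forall>n. Ck n f)"

definition lattice_box :: "int^'d \<Rightarrow> int^'d \<Rightarrow> (int^'d) set" where
  "lattice_box a b = {x. \<forall>i. a$i \<le> x$i \<and> x$i \<le> b$i}"

definition configs :: "'s set \<Rightarrow> ('s \<Rightarrow> real) set" where
  "configs \<Lambda> = PiE \<Lambda> (\<lambda>_. {-1, 1})"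

definition spin_prod :: "('s \<Rightarrow> real) \<Rightarrow> 's set \<Rightarrow> real" where
  "spin_prod \<sigma> X = (if X = {} then 0 else (\<Prod>i\<in>X. \<sigma> i))"

definition hamiltonian :: "'s set \<Rightarrow> ('s set \<Rightarrow> real) \<Rightarrow> ('s \<Rightarrow> real) \<Rightarrow> real" where
  "hamiltonian \<Lambda> J \<sigma> = - (\<Sum>X\<in>Pow \<Lambda>. J X * spin_prod \<sigma> X)"

definition cov :: "'s set \<Rightarrow> ('s set \<Rightarrow> real) \<Rightarrow> ('s \<Rightarrow> real) \<Rightarrow> ('s \<Rightarrow> real) \<Rightarrow> real" where
  "cov \<Lambda> \<Delta> \<sigma> \<tau> = (1 / real (card \<Lambda>)) * (\<Sum>X\<in>Pow \<Lambda>. (\<Delta> X)\<^sup>2 * spin_prod \<sigma> X * spin_prod \<tau> X)"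

definition partition_fn :: "'s set \<Rightarrow> ('s set \<Rightarrow> real) \<Rightarrow> real \<Rightarrow> real" where
  "partition_fn \<Lambda> J \<beta> = (\<Sum>\<sigma>\<in>configs \<Lambda>. exp (- \<beta> * hamiltonian \<Lambda> J \<sigma>))"

(* replica Gibbs state Omega_n, replicas indexed by the finite set I (n = card I) *)
definition gibbs :: "'s set \<Rightarrow> ('s set \<Rightarrow> real) \<Rightarrow> real \<Rightarrow> 'i set \<Rightarrow> (('i \<Rightarrow> 's \<Rightarrow> real) \<Rightarrow> real) \<Rightarrow> real" where
  "gibbs \<Lambda> J \<beta> I f =
     (\<Sum>s\<in>PiE I (\<lambda>_. configs \<Lambda>). f s * exp (- \<beta> * (\<Sum>i\<in>I. hamiltonian \<Lambda> J (s i))))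
       / partition_fn \<Lambda> J \<beta> ^ card I"

(* the couplings J_X = Delta_X * z_X with z_X i.i.d. standard Gaussians, so that
   J_X are independent centered Gaussians with variance Delta_X^2 *)
definition std_gauss :: "real measure" where
  "std_gauss = density lborel std_normal_density"

definition coupling :: "('s set \<Rightarrow> real) \<Rightarrow> ('s set \<Rightarrow> real) \<Rightarrow> 's set \<Rightarrow> real" where
  "coupling \<Delta> z X = \<Delta> X * z X"

definition Av :: "'s set \<Rightarrow> (('s set \<Rightarrow> real) \<Rightarrow> real) \<Rightarrow> real" where
  "Av \<Lambda> F = (\<integral>z. F z \<partial>(PiM (Pow \<Lambda>) (\<lambda>_. std_gauss)))"

definition Omega :: "'s set \<Rightarrow> ('s set \<Rightarrow> real) \<Rightarrow> real \<Rightarrow> 'i set \<Rightarrow> (('i \<Rightarrow> 's \<Rightarrow> real) \<Rightarrow> real) \<Rightarrow> ('s set \<Rightarrow> real) \<Rightarrow> real" where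
  "Omega \<Lambda> \<Delta> \<beta> I f z = gibbs \<Lambda> (coupling \<Delta> z) \<beta> I f"

definition overlap_mat :: "'s set \<Rightarrow> ('s set \<Rightarrow> real) \<Rightarrow> ('r::finite \<Rightarrow> 's \<Rightarrow> real) \<Rightarrow> real^'r^'r" where
  "overlap_mat \<Lambda> \<Delta> s = (\<chi> k l. cov \<Lambda> \<Delta> (s k) (s l))"

definition h_energy :: "'s set \<Rightarrow> ('s set \<Rightarrow> real) \<Rightarrow> ('s \<Rightarrow> real) \<Rightarrow> real" where
  "h_energy \<Lambda> J \<sigma> = hamiltonian \<Lambda> J \<sigma> / real (card \<Lambda>)"

end

theory Submission
  imports Defs "HOL-Real_Asymp.Real_Asymp"
begin

(* With J_X = \<Delta>_X z_X for independent standard Gaussians z_X, the energy average of a replica is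
   \<Omega>(h) = -(1/|\<Lambda>|) \<Sum>_X \<Delta>_X z_X \<omega>(\<sigma>_X), where \<omega> is the one-replica Gibbs state. Gaussian
   integration by parts, E[z F(z)] = E[\<partial>F/\<partial>z], turns each Av(z_X \<dots>) into the average of a
   derivative in J_X, and differentiating a replica Gibbs average in J_X gives \<beta> times the truncated
   correlation of \<sigma>_X with the replicas. Products of Gibbs averages of independent replicas are Gibbs
   averages of more replicas, so after summing over X with the weights \<Delta>_X^2 the terms are exactly the
   overlaps q_{k,R+1}, q_{R+1,R+2} and q_{1,2}; the contributions of \<sigma>_X^2 = 1 cancel in \<Delta>_2 G. *)

section \<open>Gaussian integration by parts\<close>

lemma std_normal_density_has_real_derivative:
  "(std_normal_density has_real_derivative - x * std_normal_density x) (at x)"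
  unfolding std_normal_density_def
  by (auto intro!: derivative_eq_intros simp: field_simps power2_eq_square)

lemma std_normal_density_tendsto_zero:
  "(std_normal_density \<longlongrightarrow> 0) at_top" "(std_normal_density \<longlongrightarrow> 0) at_bot"
  unfolding std_normal_density_def by real_asymp+

lemma std_normal_density_mult_bounded:
  assumes "\<And>x. \<bar>g x\<bar> \<le> B"
  shows "\<bar>std_normal_density x * g x\<bar> \<le> B * std_normal_density x"
  using mult_left_mono[OF assms[of x] normal_density_nonneg[of 0 1 x]] by (simp add: abs_mult mult.commute)

lemma integrable_std_normal_density_mult:
  assumes "g \<in> borel_measurable borel" "\<And>x. \<bar>g x\<bar> \<le> B"
  shows "integrable lborel (\<lambda>x. std_normal_density x * g x)"
    and "integrable lborel (\<lambda>x. std_normal_density x * (x * g x))"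
proof -
  show "integrable lborel (\<lambda>x. std_normal_density x * g x)"
    by (rule Bochner_Integration.integrable_bound[where f="\<lambda>x. B * std_normal_density x"])
       (use assms std_normal_density_mult_bounded[of g B]
        in \<open>auto intro!: always_eventually order_trans[OF _ abs_ge_self]\<close>)
  have xg_bound: "\<bar>std_normal_density x * (x * g x)\<bar> \<le> B * (std_normal_density x * \<bar>x\<bar>^1)" for x
    using mult_left_mono[OF std_normal_density_mult_bounded[of g B x, OF assms(2)] abs_ge_zero[of x]]
    by (simp add: abs_mult mult_ac)
  show "integrable lborel (\<lambda>x. std_normal_density x * (x * g x))"
    by (rule Bochner_Integration.integrable_bound[where f="\<lambda>x. B * (std_normal_density x * \<bar>x\<bar>^1)"])
       (use assms(1) xg_bound integrable_std_normal_moment_abs[of 1]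
        in \<open>auto intro!: always_eventually order_trans[OF _ abs_ge_self]\<close>)
qed

lemma prob_space_std_gauss: "prob_space std_gauss"
  unfolding std_gauss_def by (rule prob_space_normal_density) simp

lemma sets_std_gauss [simp, measurable_cong]: "sets std_gauss = sets borel"
  unfolding std_gauss_def by simp

lemma integral_std_gauss:
  "f \<in> borel_measurable borel \<Longrightarrow> (\<integral>x. f x \<partial>std_gauss) = (\<integral>x. std_normal_density x * f x \<partial>lborel)"
  unfolding std_gauss_def by (subst integral_density) auto

lemma integrable_std_gauss_ident: "integrable std_gauss (\<lambda>x. x)"
  unfolding std_gauss_def
  by (subst integrable_density) (use integrable_std_normal_moment[of 1] in auto)

lemma std_gauss_integration_by_parts:
  fixes f f' :: "real \<Rightarrow> real"
  assumes f: "\<And>x. (f has_real_derivative f' x) (at x)" and f'_cont: "\<And>x. isCont f' x"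
    and f_bound: "\<And>x. \<bar>f x\<bar> \<le> B" and f'_bound: "\<And>x. \<bar>f' x\<bar> \<le> B"
  shows "(\<integral>x. x * f x \<partial>std_gauss) = (\<integral>x. f' x \<partial>std_gauss)"
proof -
  let ?\<phi> = std_normal_density
  have f_cont: "isCont f x" for x
    using f by (rule DERIV_isCont)
  have f_meas: "f \<in> borel_measurable borel" and f'_meas: "f' \<in> borel_measurable borel"
    using f_cont f'_cont by (auto intro!: borel_measurable_continuous_onI continuous_at_imp_continuous_on)
  note int_f' = integrable_std_normal_density_mult(1)[OF f'_meas f'_bound]
  note int_xf = integrable_std_normal_density_mult(2)[OF f_meas f_bound]
  have boundary: "((\<lambda>x. ?\<phi> x * f x) \<longlongrightarrow> 0) F" if "(?\<phi> \<longlongrightarrow> 0) F" for F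
    by (rule Lim_null_comparison[where g="\<lambda>x. B * ?\<phi> x"])
       (use that std_normal_density_mult_bounded[of f, OF f_bound]
        in \<open>auto intro!: always_eventually tendsto_mult_right_zero\<close>)
  have "(LBINT x=-\<infinity>..\<infinity>. ?\<phi> x * f' x - ?\<phi> x * (x * f x)) = 0 - 0"
  proof (rule interval_integral_FTC_integrable[where F="\<lambda>x. ?\<phi> x * f x"])
    show "((\<lambda>x. ?\<phi> x * f x) has_vector_derivative ?\<phi> x * f' x - ?\<phi> x * (x * f x)) (at x)" for x
      unfolding has_real_derivative_iff_has_vector_derivative[symmetric]
      using std_normal_density_has_real_derivative[of x] f[of x]
      by (auto intro!: derivative_eq_intros simp: field_simps)
    show "isCont (\<lambda>x. ?\<phi> x * f' x - ?\<phi> x * (x * f x)) x" for x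
      using f'_cont[of x] f_cont[of x] DERIV_isCont[OF std_normal_density_has_real_derivative]
      by (intro continuous_intros) auto
    show "set_integrable lborel (einterval (- \<infinity>) \<infinity>) (\<lambda>x. ?\<phi> x * f' x - ?\<phi> x * (x * f x))"
      unfolding set_integrable_def using int_f' int_xf by simp
    show "(((\<lambda>x. ?\<phi> x * f x) \<circ> real_of_ereal) \<longlongrightarrow> 0) (at_right (- \<infinity>))"
      "(((\<lambda>x. ?\<phi> x * f x) \<circ> real_of_ereal) \<longlongrightarrow> 0) (at_left \<infinity>)"
      unfolding ereal_tendsto_simps using boundary std_normal_density_tendsto_zero by auto
  qed simp
  then have "(\<integral>x. ?\<phi> x * f' x - ?\<phi> x * (x * f x) \<partial>lborel) = 0"
    by (simp add: interval_lebesgue_integral_def set_lebesgue_integral_def)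
  then show ?thesis
    using int_f' int_xf f_meas f'_meas by (simp add: integral_std_gauss)
qed

definition bounded_measurable :: "'a measure \<Rightarrow> ('a \<Rightarrow> real) \<Rightarrow> bool" where
  "bounded_measurable M F \<longleftrightarrow> F \<in> borel_measurable M \<and> (\<exists>C. \<forall>z. \<bar>F z\<bar> \<le> C)"

lemma bounded_measurableI:
  "F \<in> borel_measurable M \<Longrightarrow> (\<And>z. \<bar>F z\<bar> \<le> C) \<Longrightarrow> bounded_measurable M F"
  unfolding bounded_measurable_def by blast

lemma bounded_measurableE:
  assumes "bounded_measurable M F"
  obtains C where "F \<in> borel_measurable M" "\<And>z. \<bar>F z\<bar> \<le> C"
  using assms unfolding bounded_measurable_def by blast

lemma bounded_measurable_const [simp]: "bounded_measurable M (\<lambda>z. c)"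
  by (rule bounded_measurableI[where C="\<bar>c\<bar>"]) auto

lemma bounded_measurable_add [simp]:
  assumes "bounded_measurable M F" "bounded_measurable M G"
  shows "bounded_measurable M (\<lambda>z. F z + G z)"
proof -
  obtain C D where "F \<in> borel_measurable M" "G \<in> borel_measurable M" "\<And>z. \<bar>F z\<bar> \<le> C" "\<And>z. \<bar>G z\<bar> \<le> D"
    using assms by (metis bounded_measurableE)
  then show ?thesis
    by (intro bounded_measurableI[where C="C + D"]) (auto intro: abs_triangle_ineq[THEN order_trans] add_mono)
qed

lemma bounded_measurable_mult [simp]:
  assumes "bounded_measurable M F" "bounded_measurable M G"
  shows "bounded_measurable M (\<lambda>z. F z * G z)"
proof -
  obtain C D where "F \<in> borel_measurable M" "G \<in> borel_measurable M" "\<And>z. \<bar>F z\<bar> \<le> C" "\<And>z. \<bar>G z\<bar> \<le> D"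
    using assms by (metis bounded_measurableE)
  then show ?thesis
    by (intro bounded_measurableI[where C="C * D"]) (auto simp: abs_mult intro: mult_mono')
qed

lemma bounded_measurable_diff [simp]:
  assumes "bounded_measurable M F" "bounded_measurable M G"
  shows "bounded_measurable M (\<lambda>z. F z - G z)"
  using bounded_measurable_add[OF assms(1) bounded_measurable_mult[OF bounded_measurable_const[of M "-1"] assms(2)]]
  by simp

lemma bounded_measurable_sum [simp]:
  "(\<And>x. x \<in> A \<Longrightarrow> bounded_measurable M (F x)) \<Longrightarrow> bounded_measurable M (\<lambda>z. \<Sum>x\<in>A. F x z)"
  by (induction A rule: infinite_finite_induct) auto

lemma integrable_bounded_measurable:
  "finite_measure M \<Longrightarrow> bounded_measurable M F \<Longrightarrow> integrable M F"
  by (elim bounded_measurableE finite_measure.integrable_const_bound) (auto intro: always_eventually)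

interpretation std_gauss_product: product_prob_space "\<lambda>_. std_gauss" I for I
  unfolding product_prob_space_def product_prob_space_axioms_def product_sigma_finite_def
  by (simp add: prob_space_std_gauss prob_space_imp_sigma_finite)

lemma integrable_component_mult:
  assumes "finite P" "Y \<in> P" "bounded_measurable (PiM P (\<lambda>_. std_gauss)) F"
  shows "integrable (PiM P (\<lambda>_. std_gauss)) (\<lambda>z. z Y * F z)"
proof -
  obtain C where F: "F \<in> borel_measurable (PiM P (\<lambda>_. std_gauss))" "\<And>z. \<bar>F z\<bar> \<le> C"
    using assms(3) unfolding bounded_measurable_def by blast
  have "distr (PiM P (\<lambda>_. std_gauss)) std_gauss (\<lambda>z. z Y) = std_gauss"
    using assms(2) by (rule std_gauss_product.PiM_component)
  then have "integrable (PiM P (\<lambda>_. std_gauss)) (\<lambda>z. z Y)"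
    using integrable_distr_eq[of "\<lambda>z. z Y" "PiM P (\<lambda>_. std_gauss)" std_gauss "\<lambda>x. x"]
      integrable_std_gauss_ident assms(2) by simp
  then show ?thesis
  proof (rule Bochner_Integration.integrable_bound[OF integrable_mult_right[where c=C]])
    show "(\<lambda>z. z Y * F z) \<in> borel_measurable (PiM P (\<lambda>_. std_gauss))"
      using F(1) assms(2) by measurable
    show "AE z in PiM P (\<lambda>_. std_gauss). norm (z Y * F z) \<le> norm (C * z Y)"
    proof (intro always_eventually allI)
      fix z
      have "\<bar>z Y\<bar> * \<bar>F z\<bar> \<le> \<bar>z Y\<bar> * C"
        using F(2) by (rule mult_left_mono) simp
      moreover have "0 \<le> C"
        using F(2) order_trans[OF abs_ge_zero] by blast
      ultimately show "norm (z Y * F z) \<le> norm (C * z Y)"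
        by (simp add: abs_mult mult.commute)
    qed
  qed
qed

lemma PiM_std_gauss_integration_by_parts:
  fixes F D :: "('a \<Rightarrow> real) \<Rightarrow> real"
  assumes P: "finite P" "Y \<in> P"
    and F: "bounded_measurable (PiM P (\<lambda>_. std_gauss)) F"
    and D: "bounded_measurable (PiM P (\<lambda>_. std_gauss)) D"
    and F_deriv: "\<And>z x. ((\<lambda>t. F (z(Y:=t))) has_real_derivative D (z(Y:=x))) (at x)"
    and D_cont: "\<And>z x. isCont (\<lambda>t. D (z(Y:=t))) x"
  shows "(\<integral>z. z Y * F z \<partial>PiM P (\<lambda>_. std_gauss)) = (\<integral>z. D z \<partial>PiM P (\<lambda>_. std_gauss))"
proof -
  define P' where "P' = P - {Y}"
  have P': "P = insert Y P'" "finite P'" "Y \<notin> P'"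
    using P by (auto simp: P'_def)
  obtain C\<^sub>F C\<^sub>D where "\<And>z. \<bar>F z\<bar> \<le> C\<^sub>F" "\<And>z. \<bar>D z\<bar> \<le> C\<^sub>D"
    using F D by (metis bounded_measurableE)
  then have bounds: "\<bar>F z\<bar> \<le> max C\<^sub>F C\<^sub>D" "\<bar>D z\<bar> \<le> max C\<^sub>F C\<^sub>D" for z
    by (auto intro: max.coboundedI1 max.coboundedI2)
  have "(\<integral>z. z Y * F z \<partial>PiM P (\<lambda>_. std_gauss))
      = (\<integral>z. (\<integral>t. t * F (z(Y:=t)) \<partial>std_gauss) \<partial>PiM P' (\<lambda>_. std_gauss))"
    using std_gauss_product.product_integral_insert[OF P'(2,3) integrable_component_mult[OF P F, unfolded P'(1)]]
    by (simp add: P'(1))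
  also have "\<dots> = (\<integral>z. (\<integral>t. D (z(Y:=t)) \<partial>std_gauss) \<partial>PiM P' (\<lambda>_. std_gauss))"
    using std_gauss_integration_by_parts[OF F_deriv D_cont bounds] by simp
  also have "\<dots> = (\<integral>z. D z \<partial>PiM P (\<lambda>_. std_gauss))"
    using std_gauss_product.product_integral_insert[OF P'(2,3)
        integrable_bounded_measurable[OF std_gauss_product.P.finite_measure_axioms D, unfolded P'(1)]]
    by (simp add: P'(1))
  finally show ?thesis .
qed

section \<open>Gibbs states of independent replicas\<close>

definition boltzmann_weight :: "'s set \<Rightarrow> ('s set \<Rightarrow> real) \<Rightarrow> real \<Rightarrow> ('s \<Rightarrow> real) \<Rightarrow> real" where
  "boltzmann_weight \<Lambda> J \<beta> \<sigma> = exp (- \<beta> * hamiltonian \<Lambda> J \<sigma>)"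

definition gibbs1 :: "'s set \<Rightarrow> ('s set \<Rightarrow> real) \<Rightarrow> real \<Rightarrow> (('s \<Rightarrow> real) \<Rightarrow> real) \<Rightarrow> real" where
  "gibbs1 \<Lambda> J \<beta> g = (\<Sum>\<sigma>\<in>configs \<Lambda>. g \<sigma> * boltzmann_weight \<Lambda> J \<beta> \<sigma>) / partition_fn \<Lambda> J \<beta>"

lemma boltzmann_weight_pos: "0 < boltzmann_weight \<Lambda> J \<beta> \<sigma>"
  by (simp add: boltzmann_weight_def)

lemma finite_configs: "finite \<Lambda> \<Longrightarrow> finite (configs \<Lambda>)"
  unfolding configs_def by (rule finite_PiE) auto

lemma configs_nonempty: "configs \<Lambda> \<noteq> {}"
  unfolding configs_def by (simp add: PiE_eq_empty_iff)

lemma partition_fn_eq_sum_weights: "partition_fn \<Lambda> J \<beta> = (\<Sum>\<sigma>\<in>configs \<Lambda>. boltzmann_weight \<Lambda> J \<beta> \<sigma>)"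
  by (simp add: partition_fn_def boltzmann_weight_def)

lemma partition_fn_pos: "finite \<Lambda> \<Longrightarrow> 0 < partition_fn \<Lambda> J \<beta>"
  unfolding partition_fn_eq_sum_weights
  by (rule sum_pos) (auto simp: finite_configs configs_nonempty boltzmann_weight_pos)

lemma partition_fn_power:
  "finite \<Lambda> \<Longrightarrow> finite I \<Longrightarrow> partition_fn \<Lambda> J \<beta> ^ card I
     = (\<Sum>s\<in>PiE I (\<lambda>_. configs \<Lambda>). \<Prod>i\<in>I. boltzmann_weight \<Lambda> J \<beta> (s i))"
  unfolding partition_fn_eq_sum_weights by (subst prod_sum_PiE[symmetric]) (auto simp: finite_configs)

lemma gibbs_eq_weights:
  "finite I \<Longrightarrow> gibbs \<Lambda> J \<beta> I f
     = (\<Sum>s\<in>PiE I (\<lambda>_. configs \<Lambda>). f s * (\<Prod>i\<in>I. boltzmann_weight \<Lambda> J \<beta> (s i)))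
         / partition_fn \<Lambda> J \<beta> ^ card I"
  by (simp add: gibbs_def boltzmann_weight_def sum_distrib_left exp_sum)

lemma gibbs_cong:
  "(\<And>s. s \<in> PiE I (\<lambda>_. configs \<Lambda>) \<Longrightarrow> f s = g s) \<Longrightarrow> gibbs \<Lambda> J \<beta> I f = gibbs \<Lambda> J \<beta> I g"
  unfolding gibbs_def by (intro arg_cong2[where f="(/)"] sum.cong) auto

lemma gibbs_cmult: "gibbs \<Lambda> J \<beta> I (\<lambda>s. c * f s) = c * gibbs \<Lambda> J \<beta> I f"
  unfolding gibbs_def by (simp add: sum_distrib_left mult_ac)

lemma gibbs_sum: "gibbs \<Lambda> J \<beta> I (\<lambda>s. \<Sum>x\<in>A. f x s) = (\<Sum>x\<in>A. gibbs \<Lambda> J \<beta> I (f x))"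
  unfolding gibbs_def by (simp add: sum_distrib_right sum_divide_distrib[symmetric] sum.swap[of _ A])

lemma gibbs_const: "finite \<Lambda> \<Longrightarrow> finite I \<Longrightarrow> gibbs \<Lambda> J \<beta> I (\<lambda>_. c) = c"
  using partition_fn_pos[of \<Lambda> J \<beta>]
  by (simp add: gibbs_eq_weights partition_fn_power[symmetric] sum_distrib_left[symmetric])

lemma gibbs1_cong:
  "(\<And>\<sigma>. \<sigma> \<in> configs \<Lambda> \<Longrightarrow> g \<sigma> = h \<sigma>) \<Longrightarrow> gibbs1 \<Lambda> J \<beta> g = gibbs1 \<Lambda> J \<beta> h"
  unfolding gibbs1_def by (intro arg_cong2[where f="(/)"] sum.cong) auto

lemma gibbs1_const: "finite \<Lambda> \<Longrightarrow> gibbs1 \<Lambda> J \<beta> (\<lambda>_. c) = c"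
  using partition_fn_pos[of \<Lambda> J \<beta>]
  by (simp add: gibbs1_def partition_fn_eq_sum_weights sum_distrib_left[symmetric])

lemma spin_prod_square:
  assumes "finite \<Lambda>" "X \<in> Pow \<Lambda>" "\<sigma> \<in> configs \<Lambda>"
  shows "(spin_prod \<sigma> X)\<^sup>2 = (if X = {} then 0 else 1)"
proof -
  have "\<sigma> i * \<sigma> i = 1" if "i \<in> X" for i
  proof -
    have "\<sigma> i \<in> {-1, 1}"
      using assms(2,3) that by (auto simp: configs_def PiE_iff)
    then show ?thesis
      by auto
  qed
  then show ?thesis
    by (simp add: spin_prod_def power2_eq_square prod.distrib[symmetric])
qed

lemma gibbs1_spin_prod_square:
  "finite \<Lambda> \<Longrightarrow> X \<in> Pow \<Lambda> \<Longrightarrow> gibbs1 \<Lambda> J \<beta> (\<lambda>\<sigma>. (spin_prod \<sigma> X)\<^sup>2) = (if X = {} then 0 else 1)"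
  by (simp add: gibbs1_cong[OF spin_prod_square] gibbs1_const)

lemma abs_gibbs_le:
  assumes "finite \<Lambda>" "finite I"
  shows "\<bar>gibbs \<Lambda> J \<beta> I f\<bar> \<le> (\<Sum>s\<in>PiE I (\<lambda>_. configs \<Lambda>). \<bar>f s\<bar>)"
proof -
  let ?T = "PiE I (\<lambda>_. configs \<Lambda>)" and ?w = "\<lambda>s. \<Prod>i\<in>I. boltzmann_weight \<Lambda> J \<beta> (s i)"
  let ?Z = "partition_fn \<Lambda> J \<beta> ^ card I"
  have T: "finite ?T"
    using assms by (simp add: finite_PiE finite_configs)
  have w: "0 \<le> ?w s" for s
    by (simp add: boltzmann_weight_pos prod_nonneg less_imp_le)
  have "\<bar>\<Sum>s\<in>?T. f s * ?w s\<bar> \<le> (\<Sum>s\<in>?T. \<bar>f s\<bar> * ?w s)"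
    using w by (auto intro: order_trans[OF sum_abs] simp: abs_mult)
  also have "\<dots> \<le> (\<Sum>s\<in>?T. (\<Sum>t\<in>?T. \<bar>f t\<bar>) * ?w s)"
    using T w by (intro sum_mono mult_right_mono member_le_sum) auto
  also have "\<dots> = (\<Sum>t\<in>?T. \<bar>f t\<bar>) * ?Z"
    using assms by (simp add: partition_fn_power sum_distrib_left)
  finally show ?thesis
    using partition_fn_pos[OF assms(1), of J \<beta>]
    by (simp add: gibbs_eq_weights[OF assms(2)] divide_le_eq)
qed

lemma gibbs_prod_replicas:
  assumes "finite \<Lambda>" "finite I"
  shows "gibbs \<Lambda> J \<beta> I (\<lambda>s. \<Prod>i\<in>I. g i (s i)) = (\<Prod>i\<in>I. gibbs1 \<Lambda> J \<beta> (g i))"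
proof -
  have "(\<Sum>s\<in>PiE I (\<lambda>_. configs \<Lambda>). (\<Prod>i\<in>I. g i (s i)) * (\<Prod>i\<in>I. boltzmann_weight \<Lambda> J \<beta> (s i)))
      = (\<Prod>i\<in>I. \<Sum>\<sigma>\<in>configs \<Lambda>. g i \<sigma> * boltzmann_weight \<Lambda> J \<beta> \<sigma>)"
    by (simp add: prod.distrib[symmetric] prod_sum_PiE assms finite_configs)
  then show ?thesis
    using assms by (simp add: gibbs_eq_weights gibbs1_def prod_dividef)
qed

lemma gibbs_single_replica:
  assumes "finite \<Lambda>" "finite I" "l \<in> I"
  shows "gibbs \<Lambda> J \<beta> I (\<lambda>s. g (s l)) = gibbs1 \<Lambda> J \<beta> g"
proof -
  let ?g = "\<lambda>i \<sigma>. if i = l then g \<sigma> else 1"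
  have "gibbs \<Lambda> J \<beta> I (\<lambda>s. g (s l)) = gibbs \<Lambda> J \<beta> I (\<lambda>s. \<Prod>i\<in>I. ?g i (s i))"
    using assms(2,3) by (intro gibbs_cong) simp
  also have "\<dots> = (\<Prod>i\<in>I. gibbs1 \<Lambda> J \<beta> (?g i))"
    using assms(1,2) by (rule gibbs_prod_replicas)
  also have "\<dots> = (\<Prod>i\<in>I. if i = l then gibbs1 \<Lambda> J \<beta> g else 1)"
    using assms(1) by (intro prod.cong) (auto simp: gibbs1_const)
  also have "\<dots> = gibbs1 \<Lambda> J \<beta> g"
    using assms(2,3) by simp
  finally show ?thesis .
qed

lemma gibbs1_eq_gibbs_unit: "finite \<Lambda> \<Longrightarrow> gibbs1 \<Lambda> J \<beta> g = gibbs \<Lambda> J \<beta> (UNIV :: unit set) (\<lambda>s. g (s ()))"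
  by (rule gibbs_single_replica[symmetric]) auto

lemma sum_PiE_option:
  "(\<Sum>s\<in>PiE (UNIV :: 'i option set) (\<lambda>_. S). F s)
     = (\<Sum>t\<in>PiE (UNIV :: 'i set) (\<lambda>_. S). \<Sum>\<sigma>\<in>S. F (case_option \<sigma> t))"
proof -
  have "bij_betw (\<lambda>(t, \<sigma>). case_option \<sigma> t) (PiE UNIV (\<lambda>_. S) \<times> S) (PiE UNIV (\<lambda>_. S))"
  proof (rule bij_betwI[where g="\<lambda>s. (s \<circ> Some, s None)"])
    show "(\<lambda>(t, \<sigma>). case_option \<sigma> t) \<in> PiE UNIV (\<lambda>_. S) \<times> S \<rightarrow> PiE UNIV (\<lambda>_. S)"
      by (auto simp: PiE_def Pi_def split: option.splits)
  qed (auto simp: PiE_def Pi_def fun_eq_iff split: option.splits)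
  from sum.reindex_bij_betw[OF this, of F] show ?thesis
    by (simp add: sum.cartesian_product split_def)
qed

lemma gibbs_add_replica:
  fixes A :: "('i::finite \<Rightarrow> 's \<Rightarrow> real) \<Rightarrow> real"
  assumes "finite \<Lambda>"
  shows "gibbs \<Lambda> J \<beta> (UNIV :: 'i option set) (\<lambda>s. A (s \<circ> Some) * B (s None))
       = gibbs \<Lambda> J \<beta> UNIV A * gibbs1 \<Lambda> J \<beta> B"
proof -
  let ?S = "configs \<Lambda>" and ?w = "boltzmann_weight \<Lambda> J \<beta>"
  have prod_option: "(\<Prod>u\<in>UNIV. g u) = g None * (\<Prod>i\<in>UNIV. g (Some i))" for g :: "'i option \<Rightarrow> real"
    by (simp add: UNIV_option_conv prod.reindex)
  have card_option: "card (UNIV :: 'i option set) = Suc CARD('i)"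
    by (simp add: UNIV_option_conv card_image)
  have "(\<Sum>s\<in>PiE UNIV (\<lambda>_. ?S). A (s \<circ> Some) * B (s None) * (\<Prod>u\<in>UNIV. ?w (s u)))
     = (\<Sum>t\<in>PiE UNIV (\<lambda>_. ?S). \<Sum>\<sigma>\<in>?S. (A t * (\<Prod>i\<in>UNIV. ?w (t i))) * (B \<sigma> * ?w \<sigma>))"
    unfolding sum_PiE_option by (simp add: prod_option comp_def mult_ac)
  also have "\<dots> = (\<Sum>t\<in>PiE UNIV (\<lambda>_. ?S). A t * (\<Prod>i\<in>UNIV. ?w (t i))) * (\<Sum>\<sigma>\<in>?S. B \<sigma> * ?w \<sigma>)"
    by (simp add: sum_product)
  finally show ?thesis
    by (simp add: gibbs_eq_weights gibbs1_def card_option field_simps)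
qed

lemma gibbs_two_replicas:
  "finite \<Lambda> \<Longrightarrow> gibbs \<Lambda> J \<beta> (UNIV :: bool set) (\<lambda>s. A (s True) * B (s False))
     = gibbs1 \<Lambda> J \<beta> A * gibbs1 \<Lambda> J \<beta> B"
  using gibbs_prod_replicas[of \<Lambda> UNIV J \<beta> "\<lambda>i. if i then A else B"] by (simp add: UNIV_bool mult.commute)

lemma gibbs_mult_cov:
  "gibbs \<Lambda> J \<beta> I (\<lambda>s. A s * cov \<Lambda> \<Delta> (s k) (s l))
    = 1 / real (card \<Lambda>) * (\<Sum>X\<in>Pow \<Lambda>. (\<Delta> X)\<^sup>2 * gibbs \<Lambda> J \<beta> I (\<lambda>s. A s * spin_prod (s k) X * spin_prod (s l) X))"
proof -
  have "(\<lambda>s. A s * cov \<Lambda> \<Delta> (s k) (s l))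
      = (\<lambda>s. 1 / real (card \<Lambda>) * (\<Sum>X\<in>Pow \<Lambda>. (\<Delta> X)\<^sup>2 * (A s * spin_prod (s k) X * spin_prod (s l) X)))"
    by (simp add: fun_eq_iff cov_def sum_distrib_left mult_ac)
  then show ?thesis
    by (simp only: gibbs_cmult gibbs_sum)
qed

lemma gibbs_overlap_new_replica:
  fixes F :: "('i::finite \<Rightarrow> 's \<Rightarrow> real) \<Rightarrow> real"
  assumes "finite \<Lambda>"
  shows "gibbs \<Lambda> J \<beta> (UNIV :: 'i option set) (\<lambda>s. F (s \<circ> Some) * cov \<Lambda> \<Delta> (s (Some k)) (s None))
    = 1 / real (card \<Lambda>) * (\<Sum>X\<in>Pow \<Lambda>. (\<Delta> X)\<^sup>2 *
        (gibbs \<Lambda> J \<beta> UNIV (\<lambda>t. F t * spin_prod (t k) X) * gibbs1 \<Lambda> J \<beta> (\<lambda>\<sigma>. spin_prod \<sigma> X)))"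
  using gibbs_add_replica[OF assms, of J \<beta> "\<lambda>t. F t * spin_prod (t k) _" "\<lambda>\<sigma>. spin_prod \<sigma> _"]
  by (simp add: gibbs_mult_cov)

lemma gibbs_overlap_two_new_replicas:
  fixes F :: "('i::finite \<Rightarrow> 's \<Rightarrow> real) \<Rightarrow> real"
  assumes "finite \<Lambda>"
  shows "gibbs \<Lambda> J \<beta> (UNIV :: 'i option option set)
      (\<lambda>s. F (s \<circ> Some \<circ> Some) * cov \<Lambda> \<Delta> (s (Some None)) (s None))
    = 1 / real (card \<Lambda>) * (\<Sum>X\<in>Pow \<Lambda>. (\<Delta> X)\<^sup>2 *
        (gibbs \<Lambda> J \<beta> UNIV F * (gibbs1 \<Lambda> J \<beta> (\<lambda>\<sigma>. spin_prod \<sigma> X))\<^sup>2))"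
  using gibbs_add_replica[OF assms, of J \<beta> "\<lambda>t. F (t \<circ> Some) * spin_prod (t None) _" "\<lambda>\<sigma>. spin_prod \<sigma> _"]
    gibbs_add_replica[OF assms, of J \<beta> F "\<lambda>\<sigma>. spin_prod \<sigma> _"]
  by (simp add: gibbs_mult_cov power2_eq_square mult_ac)

lemma gibbs_overlap_two_replicas:
  assumes "finite \<Lambda>"
  shows "gibbs \<Lambda> J \<beta> (UNIV :: bool set) (\<lambda>s. cov \<Lambda> \<Delta> (s True) (s False))
    = 1 / real (card \<Lambda>) * (\<Sum>X\<in>Pow \<Lambda>. (\<Delta> X)\<^sup>2 * (gibbs1 \<Lambda> J \<beta> (\<lambda>\<sigma>. spin_prod \<sigma> X))\<^sup>2)"
  using gibbs_mult_cov[of \<Lambda> J \<beta> UNIV "\<lambda>_. 1" \<Delta> True False]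
    gibbs_two_replicas[OF assms, of J \<beta> "\<lambda>\<sigma>. spin_prod \<sigma> _" "\<lambda>\<sigma>. spin_prod \<sigma> _"]
  by (simp add: power2_eq_square)

section \<open>Dependence on a single coupling\<close>

lemma tilted_average_has_real_derivative:
  fixes f b c :: "'a \<Rightarrow> real"
  assumes T: "finite T" "T \<noteq> {}" and c: "\<And>s. s \<in> T \<Longrightarrow> 0 < c s"
  defines "avg x g \<equiv> (\<Sum>s\<in>T. g s * (c s * exp (x * b s))) / (\<Sum>s\<in>T. c s * exp (x * b s))"
  shows "((\<lambda>x. avg x f) has_real_derivative avg x (\<lambda>s. f s * b s) - avg x f * avg x b) (at x)"
proof -
  have "(\<Sum>s\<in>T. c s * exp (x * b s)) \<noteq> 0"
    using T c by (intro sum_pos[THEN less_imp_neq, symmetric]) auto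
  then show ?thesis
    unfolding avg_def
    by (auto intro!: derivative_eq_intros sum.cong simp: field_simps power2_eq_square)
qed

lemma hamiltonian_fun_upd:
  assumes "finite \<Lambda>" "Y \<in> Pow \<Lambda>"
  shows "hamiltonian \<Lambda> (J(Y := t)) \<sigma> = hamiltonian \<Lambda> (J(Y := 0)) \<sigma> - t * spin_prod \<sigma> Y"
proof -
  have "(\<Sum>X\<in>Pow \<Lambda>. (J(Y := u)) X * spin_prod \<sigma> X)
      = u * spin_prod \<sigma> Y + (\<Sum>X\<in>Pow \<Lambda> - {Y}. J X * spin_prod \<sigma> X)" for u
    using assms by (simp add: sum.remove[of _ Y])
  then show ?thesis
    by (simp add: hamiltonian_def)
qed

lemma boltzmann_weight_fun_upd:
  assumes "finite \<Lambda>" "Y \<in> Pow \<Lambda>"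
  shows "boltzmann_weight \<Lambda> (J(Y := t)) \<beta> \<sigma>
    = boltzmann_weight \<Lambda> (J(Y := 0)) \<beta> \<sigma> * exp (t * (\<beta> * spin_prod \<sigma> Y))"
  unfolding boltzmann_weight_def hamiltonian_fun_upd[OF assms, of J t] exp_add[symmetric]
  by (simp add: right_diff_distrib)

lemma gibbs_fun_upd_eq_tilted:
  fixes J :: "'s set \<Rightarrow> real" and \<beta> :: real
  assumes "finite \<Lambda>" "Y \<in> Pow \<Lambda>" "finite I"
  defines "W s \<equiv> \<Prod>i\<in>I. boltzmann_weight \<Lambda> (J(Y := 0)) \<beta> (s i)"
    and "b s \<equiv> \<beta> * (\<Sum>i\<in>I. spin_prod (s i) Y)"
  shows "gibbs \<Lambda> (J(Y := t)) \<beta> I f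
    = (\<Sum>s\<in>PiE I (\<lambda>_. configs \<Lambda>). f s * (W s * exp (t * b s)))
        / (\<Sum>s\<in>PiE I (\<lambda>_. configs \<Lambda>). W s * exp (t * b s))"
proof -
  have "(\<Prod>i\<in>I. boltzmann_weight \<Lambda> (J(Y := t)) \<beta> (s i)) = W s * exp (t * b s)" for s
    unfolding boltzmann_weight_fun_upd[OF assms(1,2), of J t] prod.distrib W_def b_def
    using assms(3) by (simp add: exp_sum sum_distrib_left)
  then show ?thesis
    using assms(1,3) by (simp add: gibbs_eq_weights partition_fn_power)
qed

lemma gibbs_has_real_derivative_coupling:
  assumes "finite \<Lambda>" "Y \<in> Pow \<Lambda>" "finite I"
  shows "((\<lambda>t. gibbs \<Lambda> (J(Y := t)) \<beta> I f) has_real_derivative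
     \<beta> * ((\<Sum>i\<in>I. gibbs \<Lambda> (J(Y := x)) \<beta> I (\<lambda>s. f s * spin_prod (s i) Y))
       - real (card I) * gibbs \<Lambda> (J(Y := x)) \<beta> I f * gibbs1 \<Lambda> (J(Y := x)) \<beta> (\<lambda>\<sigma>. spin_prod \<sigma> Y))) (at x)"
proof -
  define b where "b = (\<lambda>s. \<beta> * (\<Sum>i\<in>I. spin_prod (s i) Y))"
  let ?\<Omega> = "gibbs \<Lambda> (J(Y := x)) \<beta> I"
  have "((\<lambda>t. gibbs \<Lambda> (J(Y := t)) \<beta> I f) has_real_derivative
      ?\<Omega> (\<lambda>s. f s * b s) - ?\<Omega> f * ?\<Omega> b) (at x)"
    unfolding gibbs_fun_upd_eq_tilted[OF assms] b_def
    using assms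
    by (intro tilted_average_has_real_derivative)
       (auto simp: finite_configs PiE_eq_empty_iff configs_nonempty boltzmann_weight_pos intro!: prod_pos finite_PiE)
  moreover have "?\<Omega> (\<lambda>s. f s * b s) = \<beta> * (\<Sum>i\<in>I. ?\<Omega> (\<lambda>s. f s * spin_prod (s i) Y))"
  proof -
    have "(\<lambda>s. f s * b s) = (\<lambda>s. \<beta> * (\<Sum>i\<in>I. f s * spin_prod (s i) Y))"
      by (simp add: fun_eq_iff b_def sum_distrib_left mult.left_commute)
    then show ?thesis
      by (simp only: gibbs_cmult gibbs_sum)
  qed
  moreover have "?\<Omega> b = \<beta> * real (card I) * gibbs1 \<Lambda> (J(Y := x)) \<beta> (\<lambda>\<sigma>. spin_prod \<sigma> Y)"
  proof -
    have "(\<Sum>i\<in>I. ?\<Omega> (\<lambda>s. spin_prod (s i) Y)) = (\<Sum>i\<in>I. gibbs1 \<Lambda> (J(Y := x)) \<beta> (\<lambda>\<sigma>. spin_prod \<sigma> Y))"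
      using assms by (intro sum.cong refl gibbs_single_replica) auto
    then show ?thesis
      by (simp add: b_def gibbs_cmult gibbs_sum)
  qed
  ultimately show ?thesis
    by (simp add: algebra_simps)
qed

lemma gibbs1_has_real_derivative_coupling:
  assumes "finite \<Lambda>" "Y \<in> Pow \<Lambda>"
  shows "((\<lambda>t. gibbs1 \<Lambda> (J(Y := t)) \<beta> g) has_real_derivative
     \<beta> * (gibbs1 \<Lambda> (J(Y := x)) \<beta> (\<lambda>\<sigma>. g \<sigma> * spin_prod \<sigma> Y)
       - gibbs1 \<Lambda> (J(Y := x)) \<beta> g * gibbs1 \<Lambda> (J(Y := x)) \<beta> (\<lambda>\<sigma>. spin_prod \<sigma> Y))) (at x)"
  using gibbs_has_real_derivative_coupling[OF assms finite_class.finite_UNIV, of J \<beta> "\<lambda>s. g (s ())" x]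
  unfolding gibbs1_eq_gibbs_unit[OF assms(1)] by (simp add: UNIV_unit)

section \<open>Averages over the Gaussian couplings\<close>

abbreviation gauss_couplings :: "'s set \<Rightarrow> ('s set \<Rightarrow> real) measure" where
  "gauss_couplings \<Lambda> \<equiv> PiM (Pow \<Lambda>) (\<lambda>_. std_gauss)"

abbreviation spin_mean :: "'s set \<Rightarrow> ('s set \<Rightarrow> real) \<Rightarrow> real \<Rightarrow> 's set \<Rightarrow> ('s set \<Rightarrow> real) \<Rightarrow> real" where
  "spin_mean \<Lambda> \<Delta> \<beta> X z \<equiv> gibbs1 \<Lambda> (coupling \<Delta> z) \<beta> (\<lambda>\<sigma>. spin_prod \<sigma> X)"

lemma Av_const: "Av \<Lambda> (\<lambda>z. c) = c"
  unfolding Av_def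
  by (simp add: prob_space.prob_space prob_space_PiM prob_space_std_gauss)

lemma integrable_gauss_couplings:
  "bounded_measurable (gauss_couplings \<Lambda>) F \<Longrightarrow> integrable (gauss_couplings \<Lambda>) F"
  by (rule integrable_bounded_measurable[OF std_gauss_product.P.finite_measure_axioms])

lemma Av_weighted_sum:
  assumes "\<And>X. X \<in> A \<Longrightarrow> bounded_measurable (gauss_couplings \<Lambda>) (F X)"
  shows "Av \<Lambda> (\<lambda>z. c * (\<Sum>X\<in>A. w X * F X z)) = c * (\<Sum>X\<in>A. w X * Av \<Lambda> (F X))"
  unfolding Av_def using assms
  by (simp add: integrable_gauss_couplings Bochner_Integration.integral_sum)

lemma Omega_const: "finite \<Lambda> \<Longrightarrow> finite I \<Longrightarrow> Omega \<Lambda> \<Delta> \<beta> I (\<lambda>_. c) = (\<lambda>_. c)"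
  by (simp add: fun_eq_iff Omega_def gibbs_const)

lemma spin_mean_eq_Omega:
  "finite \<Lambda> \<Longrightarrow> spin_mean \<Lambda> \<Delta> \<beta> X z = Omega \<Lambda> \<Delta> \<beta> (UNIV :: unit set) (\<lambda>s. spin_prod (s ()) X) z"
  by (simp add: Omega_def gibbs1_eq_gibbs_unit)

lemma bounded_measurable_Omega [simp]:
  assumes "finite \<Lambda>" "finite I"
  shows "bounded_measurable (gauss_couplings \<Lambda>) (Omega \<Lambda> \<Delta> \<beta> I f)"
proof (rule bounded_measurableI)
  show "Omega \<Lambda> \<Delta> \<beta> I f \<in> borel_measurable (gauss_couplings \<Lambda>)"
    unfolding Omega_def gibbs_def partition_fn_def hamiltonian_def coupling_def by measurable
  show "\<bar>Omega \<Lambda> \<Delta> \<beta> I f z\<bar> \<le> (\<Sum>s\<in>PiE I (\<lambda>_. configs \<Lambda>). \<bar>f s\<bar>)" for z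
    unfolding Omega_def using assms by (rule abs_gibbs_le)
qed

lemma bounded_measurable_spin_mean [simp]:
  "finite \<Lambda> \<Longrightarrow> bounded_measurable (gauss_couplings \<Lambda>) (spin_mean \<Lambda> \<Delta> \<beta> X)"
  by (simp add: spin_mean_eq_Omega)

lemma coupling_fun_upd: "coupling \<Delta> (z(Y := t)) = (coupling \<Delta> z)(Y := \<Delta> Y * t)"
  by (simp add: coupling_def fun_eq_iff)

lemma Omega_has_real_derivative_coupling:
  assumes "finite \<Lambda>" "Y \<in> Pow \<Lambda>" "finite I"
  shows "((\<lambda>t. Omega \<Lambda> \<Delta> \<beta> I f (z(Y := t))) has_real_derivative
     \<beta> * \<Delta> Y * ((\<Sum>i\<in>I. Omega \<Lambda> \<Delta> \<beta> I (\<lambda>s. f s * spin_prod (s i) Y) (z(Y := x)))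
       - real (card I) * Omega \<Lambda> \<Delta> \<beta> I f (z(Y := x)) * spin_mean \<Lambda> \<Delta> \<beta> Y (z(Y := x)))) (at x)"
  using DERIV_chain2[OF gibbs_has_real_derivative_coupling[OF assms, of "coupling \<Delta> z" \<beta> f "\<Delta> Y * x"]
      DERIV_cmult_Id[of "\<Delta> Y" x]]
  by (simp add: Omega_def coupling_fun_upd algebra_simps)

lemma spin_mean_has_real_derivative_coupling:
  assumes "finite \<Lambda>" "Y \<in> Pow \<Lambda>"
  shows "((\<lambda>t. spin_mean \<Lambda> \<Delta> \<beta> Y (z(Y := t))) has_real_derivative
     \<beta> * \<Delta> Y * ((if Y = {} then 0 else 1) - (spin_mean \<Lambda> \<Delta> \<beta> Y (z(Y := x)))\<^sup>2)) (at x)"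
  using DERIV_chain2[OF gibbs1_has_real_derivative_coupling[OF assms, of "coupling \<Delta> z" \<beta>
        "\<lambda>\<sigma>. spin_prod \<sigma> Y" "\<Delta> Y * x"] DERIV_cmult_Id[of "\<Delta> Y" x]]
  by (simp add: coupling_fun_upd gibbs1_spin_prod_square[OF assms] algebra_simps flip: power2_eq_square)

lemma Av_coupling_mult_spin_mean_Omega:
  assumes \<Lambda>: "finite \<Lambda>" and X: "X \<in> Pow \<Lambda>" and I: "finite I"
  shows "Av \<Lambda> (\<lambda>z. z X * (spin_mean \<Lambda> \<Delta> \<beta> X z * Omega \<Lambda> \<Delta> \<beta> I f z))
    = \<beta> * \<Delta> X * ((if X = {} then 0 else 1) * Av \<Lambda> (Omega \<Lambda> \<Delta> \<beta> I f)
        + (\<Sum>i\<in>I. Av \<Lambda> (\<lambda>z. Omega \<Lambda> \<Delta> \<beta> I (\<lambda>s. f s * spin_prod (s i) X) z * spin_mean \<Lambda> \<Delta> \<beta> X z))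
        - (real (card I) + 1) * Av \<Lambda> (\<lambda>z. Omega \<Lambda> \<Delta> \<beta> I f z * (spin_mean \<Lambda> \<Delta> \<beta> X z)\<^sup>2))"
proof -
  let ?m = "spin_mean \<Lambda> \<Delta> \<beta> X" and ?\<Omega> = "Omega \<Lambda> \<Delta> \<beta> I f"
    and ?\<Omega>\<^sub>i = "\<lambda>i. Omega \<Lambda> \<Delta> \<beta> I (\<lambda>s. f s * spin_prod (s i) X)"
  define q :: real where "q = (if X = {} then 0 else 1)"
  define D where "D z = \<beta> * \<Delta> X * (q * ?\<Omega> z + (\<Sum>i\<in>I. ?\<Omega>\<^sub>i i z * ?m z)
    - (real (card I) + 1) * (?\<Omega> z * (?m z)\<^sup>2))" for z
  have D_deriv: "((\<lambda>t. ?m (z(X := t)) * ?\<Omega> (z(X := t))) has_real_derivative D (z(X := x))) (at x)" for z x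
    using DERIV_mult[OF spin_mean_has_real_derivative_coupling[OF \<Lambda> X]
        Omega_has_real_derivative_coupling[OF \<Lambda> X I]]
    by (rule DERIV_cong) (simp add: D_def q_def algebra_simps power2_eq_square sum_distrib_left sum_distrib_right)
  have cont: "isCont (\<lambda>t. ?m (z(X := t))) x" "isCont (\<lambda>t. ?\<Omega>\<^sub>i i (z(X := t))) x"
    "isCont (\<lambda>t. ?\<Omega> (z(X := t))) x" for z x i
    using spin_mean_has_real_derivative_coupling[OF \<Lambda> X] Omega_has_real_derivative_coupling[OF \<Lambda> X I]
    by (blast intro: DERIV_isCont)+
  have "Av \<Lambda> (\<lambda>z. z X * (?m z * ?\<Omega> z)) = Av \<Lambda> D"
    unfolding Av_def
  proof (rule PiM_std_gauss_integration_by_parts)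
    show "isCont (\<lambda>t. D (z(X := t))) x" for z x
      unfolding D_def using cont by (intro continuous_intros) auto
  qed (use \<Lambda> X I D_deriv in \<open>auto simp: D_def power2_eq_square\<close>)
  also have "\<dots> = \<beta> * \<Delta> X * (q * Av \<Lambda> ?\<Omega> + (\<Sum>i\<in>I. Av \<Lambda> (\<lambda>z. ?\<Omega>\<^sub>i i z * ?m z))
      - (real (card I) + 1) * Av \<Lambda> (\<lambda>z. ?\<Omega> z * (?m z)\<^sup>2))"
    unfolding Av_def D_def using \<Lambda> I
    by (simp add: integrable_gauss_couplings power2_eq_square Bochner_Integration.integral_sum)
  finally show ?thesis
    unfolding q_def .
qed

lemma Av_coupling_mult_spin_mean:
  assumes "finite \<Lambda>" "X \<in> Pow \<Lambda>"
  shows "Av \<Lambda> (\<lambda>z. z X * spin_mean \<Lambda> \<Delta> \<beta> X z)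
    = \<beta> * \<Delta> X * ((if X = {} then 0 else 1) - Av \<Lambda> (\<lambda>z. (spin_mean \<Lambda> \<Delta> \<beta> X z)\<^sup>2))"
  using Av_coupling_mult_spin_mean_Omega[OF assms finite.emptyI, of \<Delta> \<beta> "\<lambda>_. 1"]
  by (simp add: Omega_const[OF assms(1)] Av_const)

lemma Omega_h_energy:
  assumes "finite \<Lambda>" "finite I" "l \<in> I"
  shows "Omega \<Lambda> \<Delta> \<beta> I (\<lambda>s. h_energy \<Lambda> (coupling \<Delta> z) (s l)) z
    = - (1 / real (card \<Lambda>)) * (\<Sum>X\<in>Pow \<Lambda>. \<Delta> X * (z X * spin_mean \<Lambda> \<Delta> \<beta> X z))"
proof -
  have "(\<lambda>s. h_energy \<Lambda> (coupling \<Delta> z) (s l))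
      = (\<lambda>s. - (1 / real (card \<Lambda>)) * (\<Sum>X\<in>Pow \<Lambda>. \<Delta> X * (z X * spin_prod (s l) X)))"
    by (simp add: fun_eq_iff h_energy_def hamiltonian_def coupling_def mult.assoc)
  moreover have "gibbs \<Lambda> (coupling \<Delta> z) \<beta> I (\<lambda>s. spin_prod (s l) X) = spin_mean \<Lambda> \<Delta> \<beta> X z" for X
    using assms by (rule gibbs_single_replica)
  ultimately show ?thesis
    by (simp only: Omega_def gibbs_cmult gibbs_sum)
qed

lemma Av_Omega_h_energy_mult:
  assumes \<Lambda>: "finite \<Lambda>" and I: "finite I" "l \<in> I" and F: "bounded_measurable (gauss_couplings \<Lambda>) F"
  shows "Av \<Lambda> (\<lambda>z. Omega \<Lambda> \<Delta> \<beta> I (\<lambda>s. h_energy \<Lambda> (coupling \<Delta> z) (s l)) z * F z)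
    = - (1 / real (card \<Lambda>)) * (\<Sum>X\<in>Pow \<Lambda>. \<Delta> X * Av \<Lambda> (\<lambda>z. z X * (spin_mean \<Lambda> \<Delta> \<beta> X z * F z)))"
proof -
  have "integrable (gauss_couplings \<Lambda>) (\<lambda>z. z X * (spin_mean \<Lambda> \<Delta> \<beta> X z * F z))" if "X \<in> Pow \<Lambda>" for X
    using \<Lambda> F by (intro integrable_component_mult that) auto
  then show ?thesis
    unfolding Av_def Omega_h_energy[OF \<Lambda> I]
    by (simp add: sum_distrib_right mult.assoc Bochner_Integration.integral_sum)
qed

lemma Av_Omega_h_energy_covariance:
  assumes \<Lambda>: "finite \<Lambda>" and I: "finite I" "l \<in> I"
  shows "Av \<Lambda> (\<lambda>z. Omega \<Lambda> \<Delta> \<beta> I (\<lambda>s. h_energy \<Lambda> (coupling \<Delta> z) (s l)) z * Omega \<Lambda> \<Delta> \<beta> I f z)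
      - Av \<Lambda> (\<lambda>z. Omega \<Lambda> \<Delta> \<beta> I (\<lambda>s. h_energy \<Lambda> (coupling \<Delta> z) (s l)) z) * Av \<Lambda> (Omega \<Lambda> \<Delta> \<beta> I f)
    = - \<beta> / real (card \<Lambda>) * (\<Sum>X\<in>Pow \<Lambda>. (\<Delta> X)\<^sup>2 *
        ((\<Sum>i\<in>I. Av \<Lambda> (\<lambda>z. Omega \<Lambda> \<Delta> \<beta> I (\<lambda>s. f s * spin_prod (s i) X) z * spin_mean \<Lambda> \<Delta> \<beta> X z))
         - (real (card I) + 1) * Av \<Lambda> (\<lambda>z. Omega \<Lambda> \<Delta> \<beta> I f z * (spin_mean \<Lambda> \<Delta> \<beta> X z)\<^sup>2)
         + Av \<Lambda> (\<lambda>z. (spin_mean \<Lambda> \<Delta> \<beta> X z)\<^sup>2) * Av \<Lambda> (Omega \<Lambda> \<Delta> \<beta> I f)))"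
    (is "?lhs = - \<beta> / _ * (\<Sum>X\<in>Pow \<Lambda>. (\<Delta> X)\<^sup>2 * ?E X)")
proof -
  let ?m = "spin_mean \<Lambda> \<Delta> \<beta>" and ?\<Omega> = "Omega \<Lambda> \<Delta> \<beta> I f"
  define A where "A X = Av \<Lambda> (\<lambda>z. z X * (?m X z * ?\<Omega> z))" for X
  define B where "B X = Av \<Lambda> (\<lambda>z. z X * ?m X z)" for X
  have "?lhs = - (1 / real (card \<Lambda>)) * (\<Sum>X\<in>Pow \<Lambda>. \<Delta> X * A X)
      + (1 / real (card \<Lambda>)) * (\<Sum>X\<in>Pow \<Lambda>. \<Delta> X * B X) * Av \<Lambda> ?\<Omega>"
    using Av_Omega_h_energy_mult[OF \<Lambda> I bounded_measurable_Omega[OF \<Lambda> I(1)]]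
      Av_Omega_h_energy_mult[OF \<Lambda> I bounded_measurable_const[of _ 1]]
    by (simp add: A_def B_def)
  also have "\<dots> = - (1 / real (card \<Lambda>)) * (\<Sum>X\<in>Pow \<Lambda>. \<Delta> X * A X - \<Delta> X * B X * Av \<Lambda> ?\<Omega>)"
    by (simp add: sum_subtractf sum_distrib_left sum_distrib_right sum_negf algebra_simps)
  also have "\<dots> = - (1 / real (card \<Lambda>)) * (\<Sum>X\<in>Pow \<Lambda>. \<beta> * ((\<Delta> X)\<^sup>2 * ?E X))"
  proof (intro arg_cong[where f="\<lambda>S. - (1 / real (card \<Lambda>)) * S"] sum.cong refl)
    fix X assume X: "X \<in> Pow \<Lambda>"
    show "\<Delta> X * A X - \<Delta> X * B X * Av \<Lambda> ?\<Omega> = \<beta> * ((\<Delta> X)\<^sup>2 * ?E X)"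
      unfolding A_def B_def Av_coupling_mult_spin_mean_Omega[OF \<Lambda> X I(1)] Av_coupling_mult_spin_mean[OF \<Lambda> X]
      by (simp add: algebra_simps power2_eq_square)
  qed
  finally show ?thesis
    by (simp add: sum_distrib_left)
qed

lemma Av_Omega_overlap_new_replica:
  fixes F :: "('i::finite \<Rightarrow> 's \<Rightarrow> real) \<Rightarrow> real"
  assumes "finite \<Lambda>"
  shows "Av \<Lambda> (Omega \<Lambda> \<Delta> \<beta> (UNIV :: 'i option set) (\<lambda>s. F (s \<circ> Some) * cov \<Lambda> \<Delta> (s (Some k)) (s None)))
    = 1 / real (card \<Lambda>) * (\<Sum>X\<in>Pow \<Lambda>. (\<Delta> X)\<^sup>2 *
        Av \<Lambda> (\<lambda>z. Omega \<Lambda> \<Delta> \<beta> UNIV (\<lambda>t. F t * spin_prod (t k) X) z * spin_mean \<Lambda> \<Delta> \<beta> X z))"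
proof -
  have "Omega \<Lambda> \<Delta> \<beta> (UNIV :: 'i option set) (\<lambda>s. F (s \<circ> Some) * cov \<Lambda> \<Delta> (s (Some k)) (s None))
      = (\<lambda>z. 1 / real (card \<Lambda>) * (\<Sum>X\<in>Pow \<Lambda>. (\<Delta> X)\<^sup>2 *
          (Omega \<Lambda> \<Delta> \<beta> UNIV (\<lambda>t. F t * spin_prod (t k) X) z * spin_mean \<Lambda> \<Delta> \<beta> X z)))"
    by (simp add: fun_eq_iff Omega_def gibbs_overlap_new_replica assms)
  then show ?thesis
    using assms by (simp only:) (rule Av_weighted_sum, simp)
qed

lemma Av_Omega_overlap_two_new_replicas:
  fixes F :: "('i::finite \<Rightarrow> 's \<Rightarrow> real) \<Rightarrow> real"
  assumes "finite \<Lambda>"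
  shows "Av \<Lambda> (Omega \<Lambda> \<Delta> \<beta> (UNIV :: 'i option option set)
      (\<lambda>s. F (s \<circ> Some \<circ> Some) * cov \<Lambda> \<Delta> (s (Some None)) (s None)))
    = 1 / real (card \<Lambda>) * (\<Sum>X\<in>Pow \<Lambda>. (\<Delta> X)\<^sup>2 *
        Av \<Lambda> (\<lambda>z. Omega \<Lambda> \<Delta> \<beta> UNIV F z * (spin_mean \<Lambda> \<Delta> \<beta> X z)\<^sup>2))"
proof -
  have "Omega \<Lambda> \<Delta> \<beta> (UNIV :: 'i option option set)
      (\<lambda>s. F (s \<circ> Some \<circ> Some) * cov \<Lambda> \<Delta> (s (Some None)) (s None))
      = (\<lambda>z. 1 / real (card \<Lambda>) * (\<Sum>X\<in>Pow \<Lambda>. (\<Delta> X)\<^sup>2 *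
          (Omega \<Lambda> \<Delta> \<beta> UNIV F z * (spin_mean \<Lambda> \<Delta> \<beta> X z)\<^sup>2)))"
    by (simp add: fun_eq_iff Omega_def gibbs_overlap_two_new_replicas assms)
  then show ?thesis
    using assms by (simp only:) (rule Av_weighted_sum, simp add: power2_eq_square)
qed

lemma Av_Omega_overlap_two_replicas:
  assumes "finite \<Lambda>"
  shows "Av \<Lambda> (Omega \<Lambda> \<Delta> \<beta> (UNIV :: bool set) (\<lambda>s. cov \<Lambda> \<Delta> (s True) (s False)))
    = 1 / real (card \<Lambda>) * (\<Sum>X\<in>Pow \<Lambda>. (\<Delta> X)\<^sup>2 * Av \<Lambda> (\<lambda>z. (spin_mean \<Lambda> \<Delta> \<beta> X z)\<^sup>2))"
proof -
  have "Omega \<Lambda> \<Delta> \<beta> (UNIV :: bool set) (\<lambda>s. cov \<Lambda> \<Delta> (s True) (s False))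
      = (\<lambda>z. 1 / real (card \<Lambda>) * (\<Sum>X\<in>Pow \<Lambda>. (\<Delta> X)\<^sup>2 * (spin_mean \<Lambda> \<Delta> \<beta> X z)\<^sup>2))"
    by (simp add: fun_eq_iff Omega_def gibbs_overlap_two_replicas assms)
  then show ?thesis
    using assms by (simp only:) (rule Av_weighted_sum, simp add: power2_eq_square)
qed

lemma finite_lattice_box: "finite (lattice_box a b)"
proof -
  have "lattice_box a b \<subseteq> vec_lambda ` PiE UNIV (\<lambda>i. {a$i..b$i})"
  proof
    fix x assume "x \<in> lattice_box a b"
    then have "vec_nth x \<in> PiE UNIV (\<lambda>i. {a$i..b$i})"
      by (auto simp: lattice_box_def)
    then show "x \<in> vec_lambda ` PiE UNIV (\<lambda>i. {a$i..b$i})"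
      by (metis vec_nth_inverse image_eqI)
  qed
  then show ?thesis
    by (rule finite_subset) (intro finite_imageI finite_PiE; simp)
qed

theorem lemma6:
  fixes \<Delta> :: "(int^'d) set \<Rightarrow> real"
    and a b :: "int^'d"
    and \<beta> :: real
    and G :: "real^'r^'r \<Rightarrow> real"
  assumes transl_inv: "\<forall>X v. \<Delta> ((\<lambda>x. x + v) ` X) = \<Delta> X"
    and box_ne: "\<forall>i. a$i \<le> b$i"
    and G_bound: "\<forall>m. \<bar>G m\<bar> \<le> 1"
    and G_smooth: "smooth_fun G"
  defines "\<Lambda> \<equiv> lattice_box a b"
  shows
   "(\<Sum>l\<in>(UNIV::'r set).
        Av \<Lambda> (\<lambda>z. Omega \<Lambda> \<Delta> \<beta> (UNIV::'r set) (\<lambda>s. h_energy \<Lambda> (coupling \<Delta> z) (s l)) z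
                   * Omega \<Lambda> \<Delta> \<beta> (UNIV::'r set) (\<lambda>s. G (overlap_mat \<Lambda> \<Delta> s)) z)
      - Av \<Lambda> (\<lambda>z. Omega \<Lambda> \<Delta> \<beta> (UNIV::'r set) (\<lambda>s. h_energy \<Lambda> (coupling \<Delta> z) (s l)) z)
        * Av \<Lambda> (\<lambda>z. Omega \<Lambda> \<Delta> \<beta> (UNIV::'r set) (\<lambda>s. G (overlap_mat \<Lambda> \<Delta> s)) z))
    = - \<beta> * real CARD('r) *
       ((\<Sum>k\<in>(UNIV::'r set).
           Av \<Lambda> (\<lambda>z. Omega \<Lambda> \<Delta> \<beta> (UNIV::'r option set)
              (\<lambda>s. G (overlap_mat \<Lambda> \<Delta> (s \<circ> Some)) * cov \<Lambda> \<Delta> (s (Some k)) (s None)) z))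
        - (real CARD('r) + 1) *
           Av \<Lambda> (\<lambda>z. Omega \<Lambda> \<Delta> \<beta> (UNIV::'r option option set)
              (\<lambda>s. G (overlap_mat \<Lambda> \<Delta> (s \<circ> Some \<circ> Some)) * cov \<Lambda> \<Delta> (s (Some None)) (s None)) z)
        + Av \<Lambda> (\<lambda>z. Omega \<Lambda> \<Delta> \<beta> (UNIV::'r set) (\<lambda>s. G (overlap_mat \<Lambda> \<Delta> s)) z)
          * Av \<Lambda> (\<lambda>z. Omega \<Lambda> \<Delta> \<beta> (UNIV::bool set) (\<lambda>s. cov \<Lambda> \<Delta> (s True) (s False)) z))"
proof -
  have \<Lambda>: "finite \<Lambda>"
    unfolding \<Lambda>_def by (rule finite_lattice_box)
  define f where "f s = G (overlap_mat \<Lambda> \<Delta> s)" for s :: "'r \<Rightarrow> int^'d \<Rightarrow> real"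
  let ?R = "real CARD('r)" and ?T = "Av \<Lambda> (Omega \<Lambda> \<Delta> \<beta> UNIV f)"
  let ?a1 = "\<lambda>k X. Av \<Lambda> (\<lambda>z. Omega \<Lambda> \<Delta> \<beta> UNIV (\<lambda>s. f s * spin_prod (s k) X) z * spin_mean \<Lambda> \<Delta> \<beta> X z)"
    and ?a2 = "\<lambda>X. Av \<Lambda> (\<lambda>z. Omega \<Lambda> \<Delta> \<beta> UNIV f z * (spin_mean \<Lambda> \<Delta> \<beta> X z)\<^sup>2)"
    and ?a3 = "\<lambda>X. Av \<Lambda> (\<lambda>z. (spin_mean \<Lambda> \<Delta> \<beta> X z)\<^sup>2)"
  have covariance: "Av \<Lambda> (\<lambda>z. Omega \<Lambda> \<Delta> \<beta> UNIV (\<lambda>s. h_energy \<Lambda> (coupling \<Delta> z) (s l)) z * Omega \<Lambda> \<Delta> \<beta> UNIV f z)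
      - Av \<Lambda> (\<lambda>z. Omega \<Lambda> \<Delta> \<beta> UNIV (\<lambda>s. h_energy \<Lambda> (coupling \<Delta> z) (s l)) z) * ?T
    = - \<beta> / real (card \<Lambda>) * (\<Sum>X\<in>Pow \<Lambda>. (\<Delta> X)\<^sup>2 * ((\<Sum>k\<in>UNIV. ?a1 k X) - (?R + 1) * ?a2 X + ?a3 X * ?T))"
    for l :: 'r
    using Av_Omega_h_energy_covariance[OF \<Lambda> finite_class.finite_UNIV UNIV_I] .
  have regroup: "(\<Sum>X\<in>Pow \<Lambda>. (\<Delta> X)\<^sup>2 * ((\<Sum>k\<in>UNIV. ?a1 k X) - (?R + 1) * ?a2 X + ?a3 X * ?T))
      = (\<Sum>k\<in>UNIV. \<Sum>X\<in>Pow \<Lambda>. (\<Delta> X)\<^sup>2 * ?a1 k X) - (?R + 1) * (\<Sum>X\<in>Pow \<Lambda>. (\<Delta> X)\<^sup>2 * ?a2 X)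
        + ?T * (\<Sum>X\<in>Pow \<Lambda>. (\<Delta> X)\<^sup>2 * ?a3 X)"
    by (simp add: sum.distrib sum_subtractf sum_distrib_left sum.swap[of _ UNIV] algebra_simps)
  show ?thesis
    unfolding f_def[symmetric] covariance regroup Av_Omega_overlap_new_replica[OF \<Lambda>]
      Av_Omega_overlap_two_new_replicas[OF \<Lambda>] Av_Omega_overlap_two_replicas[OF \<Lambda>]
    by (simp add: sum_distrib_left[symmetric] sum_divide_distrib[symmetric] algebra_simps
        add_divide_distrib diff_divide_distrib)
qed

end
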